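(* Let $\mathbf X_1,\mathbf X_2,\dots$ be $\mathbb R^d$-valued random vectors, $d\ge2$, with common d.f. $F$ having continuous univariate margins $F^{[1]},\dots,F^{[d]}$ and (unique) copula $C$, with associated measure $\nu_C$ on $[0,1]^d$. Fix an integer $r\ge1$ and $\kappa>1$, let $\Pi=\{(j_1/(r+1),\dots,j_d/(r+1)):j_1,\dots,j_d\in\{1,\dots,r\}\}$, $\mathbf s=(1/(r+1),\dots,1/(r+1))$, and define $$\Pi_m=\Big\{\boldsymbol\pi\in\Pi:\nu_m((\boldsymbol\pi-\mathbf s,\boldsymbol\pi])>\tfrac{1}{\kappa(r+1)^d}\Big\},\qquad \Pi_C=\Big\{\boldsymbol\pi\in\Pi:\nu_C((\boldsymbol\pi-\mathbf s,\boldsymbol\pi])>\tfrac{1}{\kappa(r+1)^d}\Big\},$$ where $\nu_m$ is the empirical measure of the pseudo-observations $\hat{\mathbf U}_i=\frac{m}{m+1}(F_{1:m}^{[1]}(X_i^{[1]}),\dots,F_{1:m}^{[d]}(X_i^{[d]}))$, $i=1,\dots,m$. Assume that (i) $\nu_C((\boldsymbol\pi-\mathbf s,\boldsymbol\pi])\ne1/(\kappa(r+1)^d)$ for each $\boldsymbol\pi\in\Pi$, and (ii) $\sup_{\mathbf u\in[0,1]^d}|C_m(\mathbf u)-C(\mathbf u)|\to0$ almost surely as $m\to\infty$. Then, almost surely, $\Pi_m=\Pi_C$ for all $m$ sufficiently large.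
   Context: $F_{1:m}^{[\ell]}$ is the empirical d.f. of $X_1^{[\ell]},\dots,X_m^{[\ell]}$ (the $\ell$th coordinates). The empirical copula $C_m$ is the empirical d.f. of $\hat{\mathbf U}_1,\dots,\hat{\mathbf U}_m$. For $\mathbf a<\mathbf b$ in $[0,1]^d$, $(\mathbf a,\mathbf b]=\{\mathbf u\in[0,1]^d:\mathbf a<\mathbf u\le\mathbf b\}$ (componentwise inequalities). The copula $C$ satisfies $F(\mathbf x)=C(F^{[1]}(x^{[1]}),\dots,F^{[d]}(x^{[d]}))$. *)

theory Defs
  imports "HOL-Probability.Probability"
begin

text \<open>Vectors in R^d are represented as real^'d with a finite index type 'd (d = CARD('d)).
Random vectors X_1, X_2, ... are X 1, X 2, ... (index 0 unused).\<close>

definition unit_cube :: "(real^'d) set" where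
  "unit_cube = {u. \<forall>j. 0 \<le> u$j \<and> u$j \<le> 1}"

text \<open>C-volume of the box (a,b], i.e. the value of the measure with d.f. C on (a,b].\<close>
definition C_volume :: "(real^'d \<Rightarrow> real) \<Rightarrow> real^'d \<Rightarrow> real^'d \<Rightarrow> real" where
  "C_volume C a b =
     (\<Sum>S\<in>Pow (UNIV :: 'd set). (-1) ^ card S * C (\<chi> j. if j \<in> S then a$j else b$j))"

definition is_copula :: "(real^'d \<Rightarrow> real) \<Rightarrow> bool" where
  "is_copula C \<longleftrightarrow>
     (\<forall>u\<in>unit_cube. (\<exists>j. u$j = 0) \<longrightarrow> C u = 0) \<and>
     (\<forall>u\<in>unit_cube. \<forall>j. (\<forall>k. k \<noteq> j \<longrightarrow> u$k = 1) \<longrightarrow> C u = u$j) \<and>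
     (\<forall>a\<in>unit_cube. \<forall>b\<in>unit_cube. (\<forall>j. a$j \<le> b$j) \<longrightarrow> 0 \<le> C_volume C a b)"

definition emp_marg :: "(nat \<Rightarrow> 'a \<Rightarrow> real^'d) \<Rightarrow> nat \<Rightarrow> 'd \<Rightarrow> 'a \<Rightarrow> real \<Rightarrow> real" where
  "emp_marg X m l \<omega> t = real (card {k\<in>{1..m}. X k \<omega> $ l \<le> t}) / real m"

definition pseudo_obs :: "(nat \<Rightarrow> 'a \<Rightarrow> real^'d) \<Rightarrow> nat \<Rightarrow> nat \<Rightarrow> 'a \<Rightarrow> real^'d" where
  "pseudo_obs X m i \<omega> = (\<chi> l. real m / (real m + 1) * emp_marg X m l \<omega> (X i \<omega> $ l))"

definition emp_copula :: "(nat \<Rightarrow> 'a \<Rightarrow> real^'d) \<Rightarrow> nat \<Rightarrow> 'a \<Rightarrow> real^'d \<Rightarrow> real" where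
  "emp_copula X m \<omega> u =
     real (card {i\<in>{1..m}. \<forall>l. pseudo_obs X m i \<omega> $ l \<le> u$l}) / real m"

definition emp_box :: "(nat \<Rightarrow> 'a \<Rightarrow> real^'d) \<Rightarrow> nat \<Rightarrow> 'a \<Rightarrow> real^'d \<Rightarrow> real^'d \<Rightarrow> real" where
  "emp_box X m \<omega> a b =
     real (card {i\<in>{1..m}. \<forall>l. a$l < pseudo_obs X m i \<omega> $ l \<and> pseudo_obs X m i \<omega> $ l \<le> b$l})
     / real m"

definition grid :: "nat \<Rightarrow> (real^'d) set" where
  "grid r = {p. \<forall>j. \<exists>k\<in>{1..r}. p$j = real k / (real r + 1)}"

definition shift_vec :: "nat \<Rightarrow> real^'d" where
  "shift_vec r = (\<chi> j. 1 / (real r + 1))"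

definition Pi_m :: "(nat \<Rightarrow> 'a \<Rightarrow> real^'d) \<Rightarrow> nat \<Rightarrow> real \<Rightarrow> nat \<Rightarrow> 'a \<Rightarrow> (real^'d) set" where
  "Pi_m X r \<kappa> m \<omega> = {p \<in> grid r.
      emp_box X m \<omega> (p - shift_vec r) p > 1 / (\<kappa> * (real r + 1) ^ CARD('d))}"

definition Pi_C :: "(real^'d \<Rightarrow> real) \<Rightarrow> nat \<Rightarrow> real \<Rightarrow> (real^'d) set" where
  "Pi_C C r \<kappa> = {p \<in> grid r.
      C_volume C (p - shift_vec r) p > 1 / (\<kappa> * (real r + 1) ^ CARD('d))}"

end

(* The argument is pathwise: fix an outcome on which C_m -> C uniformly on the unit cube.
   Inclusion-exclusion over the vertices of a box shows that nu_m((a,b]) is the C_m-volume of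
   (a,b], a fixed signed combination of 2^d values of C_m; hence nu_m((pi - s, pi]) converges to
   nu_C((pi - s, pi]) for each of the finitely many grid points pi. By (i) no limit equals the
   threshold, so every strict comparison with it, and therefore Pi_m, eventually stabilises.
   The distributional hypotheses enter only through (ii). *)

theory Submission
  imports Defs
begin

lemma C_volume_grounded:
  fixes C :: "real^'d \<Rightarrow> real"
  assumes cop: "is_copula C" and a: "a \<in> unit_cube" and b: "b \<in> unit_cube"
    and a_zero: "\<And>k. k \<notin> J \<Longrightarrow> a$k = 0"
  shows "C_volume C a b = (\<Sum>S\<in>Pow J. (-1) ^ card S * C (\<chi> k. if k \<in> S then a$k else b$k))"
  unfolding C_volume_def
proof (rule sum.mono_neutral_right)
  show "\<forall>S\<in>Pow UNIV - Pow J. (-1) ^ card S * C (\<chi> k. if k \<in> S then a$k else b$k) = 0"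
  proof
    fix S :: "'d set" assume "S \<in> Pow UNIV - Pow J"
    then obtain k where k: "k \<in> S" "k \<notin> J" by auto
    have "(\<chi> k. if k \<in> S then a$k else b$k) \<in> unit_cube"
      using a b by (auto simp: unit_cube_def)
    moreover have "(\<chi> k. if k \<in> S then a$k else b$k) $ k = 0" using k a_zero by simp
    ultimately show "(-1) ^ card S * C (\<chi> k. if k \<in> S then a$k else b$k) = 0"
      using cop unfolding is_copula_def by auto
  qed
qed auto

lemma copula_mono_coordinate:
  fixes C :: "real^'d \<Rightarrow> real"
  assumes cop: "is_copula C" and u: "u \<in> unit_cube" and t: "u$j \<le> t" "t \<le> 1"
  shows "C u \<le> C (\<chi> k. if k = j then t else u$k)"
proof -
  define a :: "real^'d" where "a = (\<chi> k. if k = j then u$j else 0)"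
  define b :: "real^'d" where "b = (\<chi> k. if k = j then t else u$k)"
  have u01: "0 \<le> u$k \<and> u$k \<le> 1" for k
    using u by (simp add: unit_cube_def)
  have a: "a \<in> unit_cube" and b: "b \<in> unit_cube" and "\<forall>k. a$k \<le> b$k"
    using u01 t order_trans[OF _ t(1)] by (auto simp: unit_cube_def a_def b_def)
  then have "0 \<le> C_volume C a b" using cop unfolding is_copula_def by blast
  also have "C_volume C a b = C b - C u"
  proof -
    have "Pow {j} = {{}, {j}}" by blast
    moreover have "(\<chi> k. if k \<in> {j} then a$k else b$k) = u"
      by (simp add: vec_eq_iff a_def b_def)
    moreover have "a$k = 0" if "k \<notin> {j}" for k using that by (simp add: a_def)
    ultimately show ?thesis using C_volume_grounded[OF cop a b, of "{j}"] by simp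
  qed
  finally show ?thesis by (simp add: b_def)
qed

lemma copula_mono:
  fixes C :: "real^'d \<Rightarrow> real"
  assumes cop: "is_copula C" and u: "u \<in> unit_cube" and v: "v \<in> unit_cube"
    and le: "\<And>k. u$k \<le> v$k"
  shows "C u \<le> C v"
proof -
  have "C u \<le> C v"
    if "finite T" "u \<in> unit_cube" "\<And>k. u$k \<le> v$k" "\<And>k. k \<notin> T \<Longrightarrow> u$k = v$k" for T u
    using that
  proof (induction T arbitrary: u rule: finite_induct)
    case empty
    then have "u = v" by (simp add: vec_eq_iff)
    then show ?case by simp
  next
    case (insert j T)
    define w where "w = (\<chi> k. if k = j then v$j else u$k)"
    have "C u \<le> C w"
      unfolding w_def using v insert.prems
      by (intro copula_mono_coordinate[OF cop]) (auto simp: unit_cube_def)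
    also have "C w \<le> C v"
      using v insert.prems by (intro insert.IH) (auto simp: w_def unit_cube_def)
    finally show ?case .
  qed
  from this[of UNIV u] show ?thesis using u le by simp
qed

lemma copula_bounds:
  fixes C :: "real^'d \<Rightarrow> real"
  assumes cop: "is_copula C" and u: "u \<in> unit_cube"
  shows "0 \<le> C u" "C u \<le> 1"
proof -
  have "0 \<le> C_volume C 0 u" using cop u unfolding is_copula_def by (auto simp: unit_cube_def)
  also have "C_volume C 0 u = C u"
    using C_volume_grounded[OF cop _ u, of 0 "{}"] by (simp add: unit_cube_def)
  finally show "0 \<le> C u" .
  have one: "(\<chi> k. 1) \<in> unit_cube" by (simp add: unit_cube_def)
  have "C u \<le> C (\<chi> k. 1)"
    using u by (intro copula_mono[OF cop u one]) (simp add: unit_cube_def)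
  also have "C (\<chi> k. 1) = 1" using cop one unfolding is_copula_def by auto
  finally show "C u \<le> 1" .
qed

lemma of_bool_all_eq_prod:
  "(of_bool (\<forall>l. P l) :: 'b::comm_semiring_1) = (\<Prod>l\<in>UNIV. of_bool (P (l::'a::finite)))"
  by (cases "\<forall>l. P l") (auto intro!: prod_zero)

lemma of_bool_box_inclusion_exclusion:
  fixes a b x :: "real^'d"
  assumes ab: "\<And>l. a$l \<le> b$l"
  shows "(of_bool (\<forall>l. a$l < x$l \<and> x$l \<le> b$l) :: real) =
    (\<Sum>S\<in>Pow UNIV. (-1) ^ card S * of_bool (\<forall>l. x$l \<le> (if l \<in> S then a$l else b$l)))"
proof -
  have "(of_bool (\<forall>l. a$l < x$l \<and> x$l \<le> b$l) :: real) =
      (\<Prod>l\<in>UNIV. - of_bool (x$l \<le> a$l) + of_bool (x$l \<le> b$l))"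
    unfolding of_bool_all_eq_prod using ab by (intro prod.cong) (auto intro: order_trans)
  also have "\<dots> = (\<Sum>S\<in>Pow UNIV. (\<Prod>l\<in>S. - of_bool (x$l \<le> a$l)) *
      (\<Prod>l\<in>UNIV - S. of_bool (x$l \<le> b$l)))"
    by (rule prod_add) simp
  also have "\<dots> = (\<Sum>S\<in>Pow UNIV. (-1) ^ card S *
      of_bool (\<forall>l. x$l \<le> (if l \<in> S then a$l else b$l)))"
    unfolding prod_uminus of_bool_all_eq_prod
    by (intro sum.cong refl) (simp add: prod.If_cases if_distrib Compl_eq_Diff_UNIV)
  finally show ?thesis .
qed

lemma emp_box_eq_C_volume_emp_copula:
  fixes X :: "nat \<Rightarrow> 'a \<Rightarrow> real^'d"
  assumes ab: "\<And>l. a$l \<le> b$l"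
  shows "emp_box X m \<omega> a b = C_volume (emp_copula X m \<omega>) a b"
proof -
  let ?U = "\<lambda>i. pseudo_obs X m i \<omega>"
  have count: "real (card {i\<in>{1..m}. P i}) = (\<Sum>i\<in>{1..m}. of_bool (P i))" for P
    by (simp add: sum_of_bool_eq Int_def)
  have "emp_box X m \<omega> a b = (\<Sum>i\<in>{1..m}. of_bool (\<forall>l. a$l < ?U i $ l \<and> ?U i $ l \<le> b$l)) / m"
    unfolding emp_box_def count ..
  also have "\<dots> = (\<Sum>i\<in>{1..m}. \<Sum>S\<in>Pow UNIV. (-1) ^ card S *
      of_bool (\<forall>l. ?U i $ l \<le> (if l \<in> S then a$l else b$l))) / m"
    unfolding of_bool_box_inclusion_exclusion[OF ab] ..
  also have "\<dots> = (\<Sum>S\<in>Pow UNIV. (-1) ^ card S *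
      ((\<Sum>i\<in>{1..m}. of_bool (\<forall>l. ?U i $ l \<le> (if l \<in> S then a$l else b$l))) / m))"
    unfolding sum_divide_distrib sum_distrib_left times_divide_eq_right by (rule sum.swap)
  also have "\<dots> = C_volume (emp_copula X m \<omega>) a b"
    unfolding C_volume_def emp_copula_def count by simp
  finally show ?thesis .
qed

lemma emp_copula_bounds: "0 \<le> emp_copula X m \<omega> u" "emp_copula X m \<omega> u \<le> 1"
proof -
  have "card {i\<in>{1..m}. \<forall>l. pseudo_obs X m i \<omega> $ l \<le> u$l} \<le> card {1..m}"
    by (rule card_mono) auto
  then show "0 \<le> emp_copula X m \<omega> u" "emp_copula X m \<omega> u \<le> 1"
    unfolding emp_copula_def by (auto simp: divide_le_eq_1)
qed

lemma grid_finite: "finite (grid r :: (real^'d) set)"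
proof -
  define A where "A = (\<lambda>k. real k / (real r + 1)) ` {1..r}"
  have "grid r \<subseteq> vec_lambda ` (Pi\<^sub>E (UNIV::'d set) (\<lambda>_. A))"
  proof
    fix p :: "real^'d" assume "p \<in> grid r"
    then have "(\<lambda>j. p$j) \<in> Pi\<^sub>E UNIV (\<lambda>_. A)" by (auto simp: grid_def A_def)
    moreover have "p = vec_lambda (\<lambda>j. p$j)" by simp
    ultimately show "p \<in> vec_lambda ` (Pi\<^sub>E UNIV (\<lambda>_. A))" by blast
  qed
  moreover have "finite (Pi\<^sub>E (UNIV::'d set) (\<lambda>_. A))" by (simp add: A_def finite_PiE)
  ultimately show ?thesis by (meson finite_imageI finite_subset)
qed

lemma grid_box_in_unit_cube:
  assumes "p \<in> grid r"
  shows "p - shift_vec r \<in> unit_cube" "p \<in> unit_cube"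
proof -
  have "0 \<le> p$l - 1 / (real r + 1)" "p$l - 1 / (real r + 1) \<le> 1" "0 \<le> p$l" "p$l \<le> 1" for l
  proof -
    from assms have "\<exists>k\<in>{1..r}. p$l = real k / (real r + 1)" by (simp add: grid_def)
    then obtain k where "k \<in> {1..r}" "p$l = real k / (real r + 1)" by blast
    then have "1 / (real r + 1) \<le> p$l" "p$l \<le> 1" by (auto simp: divide_right_mono)
    moreover have "0 < 1 / (real r + 1)" by simp
    ultimately show "0 \<le> p$l - 1 / (real r + 1)" "p$l - 1 / (real r + 1) \<le> 1" "0 \<le> p$l" "p$l \<le> 1"
      by linarith+
  qed
  then show "p - shift_vec r \<in> unit_cube" "p \<in> unit_cube"
    by (simp_all add: unit_cube_def shift_vec_def)
qed

lemma tendsto_of_SUP_abs_diff: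
  fixes f :: "'i \<Rightarrow> 'b \<Rightarrow> real"
  assumes sup: "((\<lambda>m. SUP u\<in>K. \<bar>f m u - g u\<bar>) \<longlongrightarrow> 0) F"
    and bdd: "\<forall>\<^sub>F m in F. bdd_above ((\<lambda>u. \<bar>f m u - g u\<bar>) ` K)"
    and v: "v \<in> K"
  shows "((\<lambda>m. f m v) \<longlongrightarrow> g v) F"
proof -
  have "\<forall>\<^sub>F m in F. \<bar>f m v - g v\<bar> \<le> (SUP u\<in>K. \<bar>f m u - g u\<bar>)"
    using bdd by (rule eventually_mono) (rule cSUP_upper[OF v])
  then have "((\<lambda>m. \<bar>f m v - g v\<bar>) \<longlongrightarrow> 0) F"
    by (intro tendsto_sandwich[OF _ _ tendsto_const sup]) auto
  then show ?thesis by (simp add: tendsto_rabs_zero_iff LIM_zero_iff)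
qed

(* Copulas are bounded on the cube, so the supremum in the hypothesis is a genuine one
   (SUP of an unbounded set of reals is an unspecified value). *)
lemma emp_copula_tendsto_pointwise:
  fixes C :: "real^'d \<Rightarrow> real"
  assumes cop: "is_copula C"
    and unif: "(\<lambda>m. SUP u\<in>unit_cube. \<bar>emp_copula X m \<omega> u - C u\<bar>) \<longlonglongrightarrow> 0"
    and v: "v \<in> unit_cube"
  shows "(\<lambda>m. emp_copula X m \<omega> v) \<longlonglongrightarrow> C v"
proof (rule tendsto_of_SUP_abs_diff[OF unif _ v], intro always_eventually allI bdd_aboveI2)
  fix m and u :: "real^'d" assume "u \<in> unit_cube"
  then show "\<bar>emp_copula X m \<omega> u - C u\<bar> \<le> 1"
    using copula_bounds[OF cop, of u] emp_copula_bounds[of X m \<omega> u] by linarith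
qed

lemma tendsto_C_volume:
  fixes C :: "real^'d \<Rightarrow> real"
  assumes lim: "\<And>v. v \<in> unit_cube \<Longrightarrow> ((\<lambda>m. Cs m v) \<longlongrightarrow> C v) F"
    and a: "a \<in> unit_cube" and b: "b \<in> unit_cube"
  shows "((\<lambda>m. C_volume (Cs m) a b) \<longlongrightarrow> C_volume C a b) F"
  unfolding C_volume_def
proof (intro tendsto_sum tendsto_mult tendsto_const lim)
  fix S :: "'d set"
  show "(\<chi> k. if k \<in> S then a$k else b$k) \<in> unit_cube"
    using a b by (auto simp: unit_cube_def)
qed

lemma eventually_greater_iff_tendsto:
  fixes f :: "'i \<Rightarrow> real"
  assumes "(f \<longlongrightarrow> x) F" and "x \<noteq> t"
  shows "\<forall>\<^sub>F m in F. (t < f m) = (t < x)"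
proof (cases "t < x")
  case True
  show ?thesis using order_tendstoD(1)[OF assms(1) True] by (rule eventually_mono) (simp add: True)
next
  case False
  with assms(2) have "x < t" by simp
  show ?thesis using order_tendstoD(2)[OF assms(1) \<open>x < t\<close>] by (rule eventually_mono) (simp add: False)
qed

theorem proposition3p1:
  fixes M :: "'a measure"
    and X :: "nat \<Rightarrow> 'a \<Rightarrow> real^'d"
    and F :: "real^'d \<Rightarrow> real"
    and Fm :: "'d \<Rightarrow> real \<Rightarrow> real"
    and C :: "real^'d \<Rightarrow> real"
    and r :: nat and \<kappa> :: real
  assumes "prob_space M"
    and "CARD('d) \<ge> 2"
    and rv: "\<And>i. i \<ge> 1 \<Longrightarrow> X i \<in> borel_measurable M"
    and df: "\<And>i x. i \<ge> 1 \<Longrightarrow>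
               measure M {\<omega>\<in>space M. \<forall>j. X i \<omega> $ j \<le> x$j} = F x"
    and margins: "\<And>i l t. i \<ge> 1 \<Longrightarrow> measure M {\<omega>\<in>space M. X i \<omega> $ l \<le> t} = Fm l t"
    and cont: "\<And>l. continuous_on UNIV (Fm l)"
    and copula: "is_copula C"
    and sklar: "\<And>x. F x = C (\<chi> l. Fm l (x$l))"
    and "r \<ge> 1" and "\<kappa> > 1"
    and nontie: "\<And>p. p \<in> grid r \<Longrightarrow>
               C_volume C (p - shift_vec r) p \<noteq> 1 / (\<kappa> * (real r + 1) ^ CARD('d))"
    and unif: "AE \<omega> in M. (\<lambda>m. SUP u\<in>unit_cube. \<bar>emp_copula X m \<omega> u - C u\<bar>) \<longlonglongrightarrow> 0"
  shows "AE \<omega> in M. eventually (\<lambda>m. Pi_m X r \<kappa> m \<omega> = Pi_C C r \<kappa>) sequentially"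
proof -
  let ?thr = "1 / (\<kappa> * (real r + 1) ^ CARD('d))"
  show ?thesis using unif
  proof (rule eventually_mono)
    fix \<omega>
    assume sup: "(\<lambda>m. SUP u\<in>unit_cube. \<bar>emp_copula X m \<omega> u - C u\<bar>) \<longlonglongrightarrow> 0"
    have "\<forall>\<^sub>F m in sequentially. \<forall>p\<in>grid r.
        (?thr < emp_box X m \<omega> (p - shift_vec r) p) = (?thr < C_volume C (p - shift_vec r) p)"
    proof (intro eventually_ball_finite[OF grid_finite] ballI eventually_greater_iff_tendsto)
      fix p :: "real^'d" assume p: "p \<in> grid r"
      have "emp_box X m \<omega> (p - shift_vec r) p = C_volume (emp_copula X m \<omega>) (p - shift_vec r) p" for m
        by (rule emp_box_eq_C_volume_emp_copula) (simp add: shift_vec_def)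
      then show "(\<lambda>m. emp_box X m \<omega> (p - shift_vec r) p) \<longlonglongrightarrow> C_volume C (p - shift_vec r) p"
        using emp_copula_tendsto_pointwise[OF copula sup] grid_box_in_unit_cube[OF p]
        by (simp add: tendsto_C_volume)
      show "C_volume C (p - shift_vec r) p \<noteq> ?thr" using nontie[OF p] .
    qed
    then show "\<forall>\<^sub>F m in sequentially. Pi_m X r \<kappa> m \<omega> = Pi_C C r \<kappa>"
      by (rule eventually_mono) (auto simp: Pi_m_def Pi_C_def)
  qed
qed

end
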